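(* Let $n\ge 1$ and let $O:\{0,1\}^n\to\{-,0,+\}^n$ be a partial orientation of the $n$-cube that is partially Szabó–Welzl. Then $O$ can be extended to a unique sink orientation, i.e., there exists a unique sink orientation $O':\{0,1\}^n\to\{-,+\}^n$ with $O'(v)_i=O(v)_i$ for all $v\in\{0,1\}^n$ and $i\in[n]$ with $O(v)_i\neq 0$.
   Context: The $n$-cube $Q_n$ has vertex set $\{0,1\}^n$, two vertices being adjacent iff they differ in exactly one coordinate. A face of $Q_n$ is a set of the form $\{w\in\{0,1\}^n : w_j=u_j \text{ for all } j\notin I\}$ for some $u\in\{0,1\}^n$ and $I\subseteq[n]$; it spans the dimensions in $I$. A partial orientation is a function $O:\{0,1\}^n\to\{-,0,+\}^n$, where $O(v)_i=+$ means the half-edge of $v$ in dimension $i$ is outgoing, $O(v)_i=-$ incoming, and $O(v)_i=0$ unoriented (degenerate). An orientation is a partial orientation with no zero entries. A unique sink orientation (USO) is an orientation such that every non-empty face $f$ contains exactly one vertex $v$ with $O(v)_i=-$ for all dimensions $i$ spanned by $f$. A partial orientation $O$ is partially Szabó–Welzl if for any two distinct vertices $v,w$, either (1) $O(v)_i=O(w)_i=0$ for all $i$ with $v_i\neq w_i$, or (2) there exists $i$ with $v_i\neq w_i$ and $\{O(v)_i,O(w)_i\}=\{-,+\}$. *)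

theory Defs
  imports Main
begin

text \<open>Signs of half-edges: Minus = incoming, Zero = unoriented, Plus = outgoing.\<close>
datatype sign = Minus | Zero | Plus

text \<open>Vertices of the n-cube: bit vectors \<open>nat \<Rightarrow> bool\<close>, coordinates 0..n-1
  (coordinate i+1 of the paper), all coordinates \<open>\<ge> n\<close> fixed to False.\<close>
definition cube :: "nat \<Rightarrow> (nat \<Rightarrow> bool) set" where
  "cube n = {v. \<forall>i. n \<le> i \<longrightarrow> \<not> v i}"

definition face :: "nat \<Rightarrow> (nat \<Rightarrow> bool) \<Rightarrow> nat set \<Rightarrow> (nat \<Rightarrow> bool) set" where
  "face n u I = {w \<in> cube n. \<forall>j<n. j \<notin> I \<longrightarrow> w j = u j}"

text \<open>A partial orientation Or assigns Or v i to vertex v and dimension i < n;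
  values outside the cube / for i \<ge> n are irrelevant.\<close>
definition is_orientation :: "nat \<Rightarrow> ((nat \<Rightarrow> bool) \<Rightarrow> nat \<Rightarrow> sign) \<Rightarrow> bool" where
  "is_orientation n Or \<longleftrightarrow> (\<forall>v\<in>cube n. \<forall>i<n. Or v i \<noteq> Zero)"

definition is_USO :: "nat \<Rightarrow> ((nat \<Rightarrow> bool) \<Rightarrow> nat \<Rightarrow> sign) \<Rightarrow> bool" where
  "is_USO n Or \<longleftrightarrow> is_orientation n Or \<and>
     (\<forall>u\<in>cube n. \<forall>I\<subseteq>{..<n}.
        (\<exists>!v. v \<in> face n u I \<and> (\<forall>i\<in>I. Or v i = Minus)))"

definition partially_SW :: "nat \<Rightarrow> ((nat \<Rightarrow> bool) \<Rightarrow> nat \<Rightarrow> sign) \<Rightarrow> bool" where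
  "partially_SW n Or \<longleftrightarrow> (\<forall>v\<in>cube n. \<forall>w\<in>cube n. v \<noteq> w \<longrightarrow>
     ((\<forall>i<n. v i \<noteq> w i \<longrightarrow> Or v i = Zero \<and> Or w i = Zero) \<or>
      (\<exists>i<n. v i \<noteq> w i \<and> {Or v i, Or w i} = {Minus, Plus})))"

end

theory Submission
  imports Defs
begin

text \<open>Orient every unoriented edge towards its endpoint with coordinate True; this is
  consistent on both half-edges, and any two vertices that were separated only by
  degenerate dimensions become separated by a properly oriented edge. An orientation in
  which every two distinct vertices are separated by an edge oriented in opposite directions
  at the two vertices is a USO: on a face spanning \<open>I\<close> the outmap
  \<open>v \<mapsto> {i \<in> I. v is outgoing in i}\<close> is injective, hence a bijection onto \<open>Pow I\<close>, and
  the preimage of \<open>{}\<close> is the unique sink.\<close>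

definition szabo_welzl :: "nat \<Rightarrow> ((nat \<Rightarrow> bool) \<Rightarrow> nat \<Rightarrow> sign) \<Rightarrow> bool" where
  "szabo_welzl n Or \<longleftrightarrow> (\<forall>v\<in>cube n. \<forall>w\<in>cube n. v \<noteq> w \<longrightarrow>
     (\<exists>i<n. v i \<noteq> w i \<and> {Or v i, Or w i} = {Minus, Plus}))"

definition fill_zeros :: "((nat \<Rightarrow> bool) \<Rightarrow> nat \<Rightarrow> sign) \<Rightarrow> (nat \<Rightarrow> bool) \<Rightarrow> nat \<Rightarrow> sign" where
  "fill_zeros Or v i = (if Or v i = Zero then (if v i then Minus else Plus) else Or v i)"

lemma opposite_signs_iff:
  "{a, b} = {Minus, Plus} \<longleftrightarrow> (a = Minus \<and> b = Plus) \<or> (a = Plus \<and> b = Minus)"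
  by (auto simp: doubleton_eq_iff)

lemma cube_differ_below:
  assumes "v \<in> cube n" "w \<in> cube n" "v i \<noteq> w i"
  shows "i < n"
  using assms unfolding cube_def by (metis mem_Collect_eq not_le)

lemma face_subset_cube: "face n u I \<subseteq> cube n"
  unfolding face_def by blast

lemma face_differ_in_dims:
  assumes "v \<in> face n u I" "w \<in> face n u I" "v i \<noteq> w i"
  shows "i \<in> I"
proof -
  have "i < n" using assms face_subset_cube cube_differ_below by (metis subsetD)
  show ?thesis
  proof (rule ccontr)
    assume "i \<notin> I"
    with \<open>i < n\<close> assms(1,2) have "v i = u i" "w i = u i" unfolding face_def by blast+
    with assms(3) show False by metis
  qed
qed

lemma bij_betw_face_Pow:
  assumes u: "u \<in> cube n" and I: "I \<subseteq> {..<n}"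
  shows "bij_betw (\<lambda>v. {i\<in>I. v i}) (face n u I) (Pow I)"
proof (rule bij_betw_byWitness[where f' = "\<lambda>S j. if j \<in> I then j \<in> S else u j"])
  show "\<forall>v\<in>face n u I. (\<lambda>j. if j \<in> I then j \<in> {i\<in>I. v i} else u j) = v"
  proof (intro ballI ext)
    fix v j assume v: "v \<in> face n u I"
    have "u j = v j" if "j \<notin> I"
    proof (cases "j < n")
      case True with v that show ?thesis unfolding face_def by blast
    next
      case False
      moreover have "v \<in> cube n" using v face_subset_cube by blast
      ultimately have "\<not> u j" "\<not> v j" using u unfolding cube_def by auto
      then show ?thesis by simp
    qed
    then show "(if j \<in> I then j \<in> {i\<in>I. v i} else u j) = v j" by simp
  qed
  show "(\<lambda>S j. if j \<in> I then j \<in> S else u j) ` Pow I \<subseteq> face n u I"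
    using u I unfolding face_def cube_def by auto
qed auto

lemma card_face: "u \<in> cube n \<Longrightarrow> I \<subseteq> {..<n} \<Longrightarrow> card (face n u I) = card (Pow I)"
  using bij_betw_same_card[OF bij_betw_face_Pow] .

lemma szabo_welzl_outmap_inj_on_face:
  assumes "szabo_welzl n Or"
  shows "inj_on (\<lambda>v. {i\<in>I. Or v i = Plus}) (face n u I)"
proof (rule inj_onI, rule ccontr)
  fix v w
  assume v: "v \<in> face n u I" and w: "w \<in> face n u I" and ne: "v \<noteq> w"
    and same: "{i\<in>I. Or v i = Plus} = {i\<in>I. Or w i = Plus}"
  obtain i where i: "v i \<noteq> w i" and opposite: "{Or v i, Or w i} = {Minus, Plus}"
    using assms v w ne face_subset_cube unfolding szabo_welzl_def by blast
  have "i \<in> I" using face_differ_in_dims[OF v w i] .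
  then have "Or v i = Plus \<longleftrightarrow> Or w i = Plus" using same by blast
  with opposite show False by (auto simp: opposite_signs_iff)
qed

lemma szabo_welzl_face_has_sink:
  assumes "szabo_welzl n Or" "is_orientation n Or" "u \<in> cube n" "I \<subseteq> {..<n}"
  obtains v where "v \<in> face n u I" "\<forall>i\<in>I. Or v i = Minus"
proof -
  let ?out = "\<lambda>v. {i\<in>I. Or v i = Plus}"
  have "finite (Pow I)" using assms(4) finite_subset by blast
  moreover have "?out ` face n u I \<subseteq> Pow I" by auto
  moreover have "card (?out ` face n u I) = card (Pow I)"
    using card_image[OF szabo_welzl_outmap_inj_on_face[OF assms(1)]] card_face[OF assms(3,4)]
    by simp
  ultimately have "?out ` face n u I = Pow I" by (rule card_subset_eq)
  then have "{} \<in> ?out ` face n u I" by simp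
  then obtain v where v: "v \<in> face n u I" "{} = ?out v" by (rule imageE)
  have "Or v i = Minus" if "i \<in> I" for i
  proof -
    have "Or v i \<noteq> Zero"
      using assms(2,4) v(1) face_subset_cube that unfolding is_orientation_def by blast
    moreover have "Or v i \<noteq> Plus" using v(2) that by (simp add: set_eq_iff)
    ultimately show ?thesis by (cases "Or v i") auto
  qed
  with v(1) show thesis using that by blast
qed

lemma szabo_welzl_sink_unique:
  assumes "szabo_welzl n Or" "v \<in> face n u I" "w \<in> face n u I"
    and "\<forall>i\<in>I. Or v i = Minus" "\<forall>i\<in>I. Or w i = Minus"
  shows "v = w"
proof (rule ccontr)
  assume "v \<noteq> w"
  then obtain i where i: "v i \<noteq> w i" and opposite: "{Or v i, Or w i} = {Minus, Plus}"
    using assms(1-3) face_subset_cube unfolding szabo_welzl_def by blast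
  have "i \<in> I" using face_differ_in_dims[OF assms(2,3) i] .
  then have "Or v i = Minus" "Or w i = Minus" using assms(4,5) by blast+
  with opposite show False by (simp add: opposite_signs_iff)
qed

lemma szabo_welzl_imp_USO:
  assumes "szabo_welzl n Or" "is_orientation n Or"
  shows "is_USO n Or"
  unfolding is_USO_def
proof (intro conjI ballI allI impI assms(2))
  fix u I assume "u \<in> cube n" "I \<subseteq> {..<n}"
  then obtain v where "v \<in> face n u I" "\<forall>i\<in>I. Or v i = Minus"
    using szabo_welzl_face_has_sink assms by blast
  then show "\<exists>!v. v \<in> face n u I \<and> (\<forall>i\<in>I. Or v i = Minus)"
    using szabo_welzl_sink_unique[OF assms(1)] by blast
qed

lemma is_orientation_fill_zeros: "is_orientation n (fill_zeros Or)"
  unfolding is_orientation_def fill_zeros_def by auto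

lemma fill_zeros_extends: "Or v i \<noteq> Zero \<Longrightarrow> fill_zeros Or v i = Or v i"
  unfolding fill_zeros_def by simp

lemma partially_SW_imp_szabo_welzl_fill_zeros:
  assumes "partially_SW n Or"
  shows "szabo_welzl n (fill_zeros Or)"
  unfolding szabo_welzl_def
proof (intro ballI impI)
  fix v w assume v: "v \<in> cube n" and w: "w \<in> cube n" and ne: "v \<noteq> w"
  from assms v w ne
  consider (degenerate) "\<forall>i<n. v i \<noteq> w i \<longrightarrow> Or v i = Zero \<and> Or w i = Zero"
    | (separated) i where "i < n" "v i \<noteq> w i" "{Or v i, Or w i} = {Minus, Plus}"
    unfolding partially_SW_def by blast
  then show "\<exists>i<n. v i \<noteq> w i \<and> {fill_zeros Or v i, fill_zeros Or w i} = {Minus, Plus}"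
  proof cases
    case degenerate
    obtain i where i: "v i \<noteq> w i" using ne by blast
    have "i < n" using cube_differ_below[OF v w i] .
    then have "Or v i = Zero" "Or w i = Zero" using degenerate i by blast+
    then have "{fill_zeros Or v i, fill_zeros Or w i} = {Minus, Plus}"
      using i by (cases "v i"; cases "w i") (simp_all add: fill_zeros_def insert_commute)
    with \<open>i < n\<close> i show ?thesis by blast
  next
    case (separated i)
    then have "Or v i \<noteq> Zero" "Or w i \<noteq> Zero" by (auto simp: opposite_signs_iff)
    then have "{fill_zeros Or v i, fill_zeros Or w i} = {Minus, Plus}"
      using separated(3) by (simp add: fill_zeros_extends)
    with separated(1,2) show ?thesis by blast
  qed
qed

theorem mainTheorem1:
  fixes n :: nat and Or :: "(nat \<Rightarrow> bool) \<Rightarrow> nat \<Rightarrow> sign"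
  assumes "n \<ge> 1" and "partially_SW n Or"
  shows "\<exists>O'. is_USO n O' \<and>
           (\<forall>v\<in>cube n. \<forall>i<n. Or v i \<noteq> Zero \<longrightarrow> O' v i = Or v i)"
proof (intro exI conjI)
  show "is_USO n (fill_zeros Or)"
    using szabo_welzl_imp_USO partially_SW_imp_szabo_welzl_fill_zeros[OF assms(2)]
      is_orientation_fill_zeros by blast
  show "\<forall>v\<in>cube n. \<forall>i<n. Or v i \<noteq> Zero \<longrightarrow> fill_zeros Or v i = Or v i"
    using fill_zeros_extends by blast
qed

end
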